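(* Let $\mu,\nu$ be constants and consider the equation $m_t+f(u,u_x)m+(g(u,u_x)m)_x=0$, $m=u-u_{xx}$, where $(f,g)$ belongs to one of the three families: (a) $\nu=0$, $\mu=2$, $f=-\tfrac12u_xh'(u)$, $g=h(u)$ with $h$ an arbitrary smooth function; (b) $\nu\neq0$, $\mu=2$, $f=\alpha u_x$, $g=-2\alpha u+\beta$ with $\alpha,\beta$ constants; (c) $\mu\neq2$, $\nu=(\mu-2)\beta$, $f=\alpha u_x/(u+\beta)^3$, $g=\alpha/(u+\beta)^2$ with $\alpha,\beta$ constants. Then for every locally smooth solution $u(t,x)$ the local conservation law $D_tT+D_x\Phi=0$ holds with $$T=u_{xx}^2+\mu u_x^2+(\mu-1)u^2+2\nu u,$$ $$\Phi=2((1-\mu)u-\nu)u_{tx}-2u_xu_t+\big(2((\mu-2)u+\nu)+m\big)mg+\big((2-\mu)(u^2-u_x^2)-\nu u\big)g+\tfrac12((\mu-2)u+\nu)u_x^2g_u+\nu G,$$ where $G=\int g\,du$. Consequently, on a spatial domain $\Omega\subseteq\mathbb R$, the gradient energy $E[u]=\int_\Omega u_{xx}^2+\mu u_x^2+(\mu-1)u^2+2\nu u\,dx$ satisfies $\frac{d}{dt}E=0$ for all solutions whose flux $\Phi$ vanishes at $\partial\Omega$.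
   Context: $D_t$, $D_x$ denote total derivatives; the conservation law holds on solutions, i.e. after eliminating $m_t$ via $m_t=-f(u,u_x)m-(g(u,u_x)m)_x$. In each family $g$ depends only on $u$, $g_u$ is its derivative, and $G$ is an antiderivative of $g$ with respect to $u$. In family (c) the expressions are considered where $u+\beta\neq0$. *)

theory Defs
  imports "HOL-Analysis.Analysis"
begin

definition pdx :: "(real \<Rightarrow> real \<Rightarrow> real) \<Rightarrow> real \<Rightarrow> real \<Rightarrow> real" where
  "pdx F t x = deriv (\<lambda>y. F t y) x"

definition pdt :: "(real \<Rightarrow> real \<Rightarrow> real) \<Rightarrow> real \<Rightarrow> real \<Rightarrow> real" where
  "pdt F t x = deriv (\<lambda>s. F s x) t"

fun pds :: "bool list \<Rightarrow> (real \<Rightarrow> real \<Rightarrow> real) \<Rightarrow> real \<Rightarrow> real \<Rightarrow> real" where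
  "pds [] F = F"
| "pds (b # bs) F = (if b then pdt else pdx) (pds bs F)"

definition smooth2 :: "(real \<times> real) set \<Rightarrow> (real \<Rightarrow> real \<Rightarrow> real) \<Rightarrow> bool" where
  "smooth2 U F \<longleftrightarrow> open U \<and> (\<forall>ds. (\<lambda>z. pds ds F (fst z) (snd z)) differentiable_on U)"

definition smooth1 :: "(real \<Rightarrow> real) \<Rightarrow> bool" where
  "smooth1 h \<longleftrightarrow> (\<forall>n. ((deriv ^^ n) h) differentiable_on UNIV)"

definition mfun :: "(real \<Rightarrow> real \<Rightarrow> real) \<Rightarrow> real \<Rightarrow> real \<Rightarrow> real" where
  "mfun u t x = u t x - pdx (pdx u) t x"

definition solves_at ::
  "(real \<Rightarrow> real \<Rightarrow> real) \<Rightarrow> (real \<Rightarrow> real) \<Rightarrow> (real \<Rightarrow> real \<Rightarrow> real) \<Rightarrow> real \<Rightarrow> real \<Rightarrow> bool" where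
  "solves_at f g u t x \<longleftrightarrow>
     pdt (mfun u) t x + f (u t x) (pdx u t x) * mfun u t x
     + pdx (\<lambda>s y. g (u s y) * mfun u s y) t x = 0"

definition Tdens :: "real \<Rightarrow> real \<Rightarrow> (real \<Rightarrow> real \<Rightarrow> real) \<Rightarrow> real \<Rightarrow> real \<Rightarrow> real" where
  "Tdens \<mu> \<nu> u t x = (pdx (pdx u) t x)\<^sup>2 + \<mu> * (pdx u t x)\<^sup>2 + (\<mu> - 1) * (u t x)\<^sup>2 + 2 * \<nu> * u t x"

text \<open>Flux Phi (u_tx = d/dx d/dt u; g_u = deriv g; G an antiderivative of g).\<close>
definition Phi ::
  "real \<Rightarrow> real \<Rightarrow> (real \<Rightarrow> real) \<Rightarrow> (real \<Rightarrow> real) \<Rightarrow> (real \<Rightarrow> real \<Rightarrow> real) \<Rightarrow> real \<Rightarrow> real \<Rightarrow> real" where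
  "Phi \<mu> \<nu> g G u t x =
     (let v = u t x; vx = pdx u t x; vt = pdt u t x; vtx = pdx (pdt u) t x; m = mfun u t x in
      2 * ((1 - \<mu>) * v - \<nu>) * vtx - 2 * vx * vt
      + (2 * ((\<mu> - 2) * v + \<nu>) + m) * m * g v
      + ((2 - \<mu>) * (v\<^sup>2 - vx\<^sup>2) - \<nu> * v) * g v
      + 1/2 * ((\<mu> - 2) * v + \<nu>) * vx\<^sup>2 * deriv g v
      + \<nu> * G v)"

end

theory Submission
  imports Defs
begin

text \<open>Written in the jet variables of \<open>u\<close>, \<open>D\<^sub>t T + D\<^sub>x \<Phi>\<close> equals \<open>2((\<mu> - 2)u + \<nu> + m)\<close>
  times the left-hand side of the equation plus the remainder
  \<open>-((\<mu> - 2)u + \<nu> + m) m (2f + u\<^sub>x g') + u\<^sub>x\<^sup>3 (3(\<mu> - 2)g' + ((\<mu> - 2)u + \<nu>)g'')/2\<close>,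
  in which \<open>g\<close> itself has cancelled. In each of the three families both brackets vanish
  identically, so the conservation law holds on solutions; the computation uses
  \<open>D\<^sub>t u\<^sub>x\<^sub>x = u\<^sub>t\<^sub>x\<^sub>x\<close>, i.e. Schwarz's theorem for the smooth solution. The energy identity
  follows by differentiating \<open>E\<close> under the integral sign and integrating
  \<open>D\<^sub>t T = -D\<^sub>x \<Phi>\<close> over \<open>[a, b]\<close>.\<close>

lemma has_real_derivative_integral_parameter:
  fixes F Ft :: "real \<Rightarrow> real \<Rightarrow> real"
  assumes S: "open S" "s \<in> S" "S \<times> {a..b} \<subseteq> U"
    and Ft: "\<And>s y. (s, y) \<in> U \<Longrightarrow> ((\<lambda>s. F s y) has_real_derivative Ft s y) (at s)"
    and cont_F: "continuous_on U (\<lambda>z. F (fst z) (snd z))"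
    and cont_Ft: "continuous_on U (\<lambda>z. Ft (fst z) (snd z))"
  shows "((\<lambda>s. integral {a..b} (F s)) has_real_derivative integral {a..b} (Ft s)) (at s)"
proof -
  obtain e where e: "e > 0" "ball s e \<subseteq> S" using S open_contains_ball by blast
  have box: "(s', y) \<in> U" if "s' \<in> ball s e" "y \<in> {a..b}" for s' y
    using that e S(3) by blast
  have "((\<lambda>s. integral (cbox a b) (F s)) has_field_derivative integral (cbox a b) (Ft s))
      (at s within ball s e)"
  proof (rule leibniz_rule_field_derivative)
    fix s' y assume "s' \<in> ball s e" "y \<in> cbox a b"
    then show "((\<lambda>s. F s y) has_field_derivative Ft s' y) (at s' within ball s e)"
      using Ft box by (auto intro: has_field_derivative_at_within)
  next
    fix s' assume s': "s' \<in> ball s e"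
    have "continuous_on {a..b} (\<lambda>y. F (fst (s', y)) (snd (s', y)))"
      by (rule continuous_on_compose2[OF cont_F]) (use s' box in \<open>auto intro!: continuous_intros\<close>)
    then show "F s' integrable_on cbox a b" by (simp add: integrable_continuous_interval)
  next
    have "continuous_on (ball s e \<times> cbox a b) (\<lambda>z. Ft (fst z) (snd z))"
      by (rule continuous_on_subset[OF cont_Ft]) (use box in auto)
    then show "continuous_on (ball s e \<times> cbox a b) (\<lambda>(s, y). Ft s y)"
      by (simp add: case_prod_unfold)
  qed (use e in auto)
  then show ?thesis using at_within_open[of s "ball s e"] e by simp
qed

lemma integral_eq_diff_of_real_derivative:
  assumes "a \<le> b" "\<And>z. z \<in> {a..b} \<Longrightarrow> (F has_real_derivative F' z) (at z)"
  shows "integral {a..b} F' = F b - F a"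
  by (metis assms fundamental_theorem_of_calculus has_real_derivative_iff_has_vector_derivative
      has_vector_derivative_at_within integral_unique)

lemma partial_t_eq_integral_of_mixed_partial:
  fixes F Fx Ft Fxt :: "real \<Rightarrow> real \<Rightarrow> real"
  assumes S: "open S" "s \<in> S" "S \<times> {a..b} \<subseteq> U" and y: "y \<in> {a..b}"
    and dx: "\<And>s y. (s, y) \<in> U \<Longrightarrow> ((\<lambda>y. F s y) has_real_derivative Fx s y) (at y)"
    and dt: "\<And>s y. (s, y) \<in> U \<Longrightarrow> ((\<lambda>s. F s y) has_real_derivative Ft s y) (at s)"
    and dxt: "\<And>s y. (s, y) \<in> U \<Longrightarrow> ((\<lambda>s. Fx s y) has_real_derivative Fxt s y) (at s)"
    and cont_Fx: "continuous_on U (\<lambda>z. Fx (fst z) (snd z))"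
    and cont_Fxt: "continuous_on U (\<lambda>z. Fxt (fst z) (snd z))"
  shows "Ft s y = Ft s a + integral {a..y} (Fxt s)"
proof -
  have sub: "S \<times> {a..y} \<subseteq> U" using S(3) y by auto
  have F_eq: "F s' y = F s' a + integral {a..y} (Fx s')" if "s' \<in> S" for s'
  proof -
    have "integral {a..y} (Fx s') = F s' y - F s' a"
      by (intro integral_eq_diff_of_real_derivative dx) (use sub that y in auto)
    then show ?thesis by simp
  qed
  have "(s, a) \<in> U" using S y by auto
  then have "((\<lambda>s. F s a + integral {a..y} (Fx s)) has_real_derivative Ft s a + integral {a..y} (Fxt s)) (at s)"
    by (intro DERIV_add dt has_real_derivative_integral_parameter[OF S(1,2) sub dxt cont_Fx cont_Fxt])
  moreover have "((\<lambda>s. F s a + integral {a..y} (Fx s)) has_real_derivative Ft s y) (at s)"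
    by (rule has_field_derivative_transform_within_open[OF dt S(1,2)]) (use S y F_eq in auto)
  ultimately show ?thesis using DERIV_unique by blast
qed

lemma mixed_partials_eq:
  fixes F Fx Ft Fxt Ftx :: "real \<Rightarrow> real \<Rightarrow> real"
  assumes U: "open U" "(t, x) \<in> U"
    and dx: "\<And>s y. (s, y) \<in> U \<Longrightarrow> ((\<lambda>y. F s y) has_real_derivative Fx s y) (at y)"
    and dt: "\<And>s y. (s, y) \<in> U \<Longrightarrow> ((\<lambda>s. F s y) has_real_derivative Ft s y) (at s)"
    and dxt: "\<And>s y. (s, y) \<in> U \<Longrightarrow> ((\<lambda>s. Fx s y) has_real_derivative Fxt s y) (at s)"
    and dtx: "\<And>s y. (s, y) \<in> U \<Longrightarrow> ((\<lambda>y. Ft s y) has_real_derivative Ftx s y) (at y)"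
    and cont_Fx: "continuous_on U (\<lambda>z. Fx (fst z) (snd z))"
    and cont_Fxt: "continuous_on U (\<lambda>z. Fxt (fst z) (snd z))"
  shows "Ftx t x = Fxt t x"
proof -
  obtain e where e: "e > 0" "ball (t, x) e \<subseteq> U" using U open_contains_ball by blast
  define d where "d = e / 2"
  have d: "d > 0" using e by (simp add: d_def)
  have box: "ball t d \<times> {x - d..x + d} \<subseteq> U"
  proof clarify
    fix s y assume "s \<in> ball t d" "y \<in> {x - d..x + d}"
    have "dist (t, x) (s, y) \<le> \<bar>dist t s\<bar> + \<bar>dist x y\<bar>"
      unfolding dist_Pair_Pair by (rule sqrt_sum_squares_le_sum_abs)
    also have "\<dots> < e" using \<open>s \<in> ball t d\<close> \<open>y \<in> {x - d..x + d}\<close>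
      by (auto simp: d_def dist_real_def abs_real_def)
    finally show "(s, y) \<in> U" using e by auto
  qed
  have Ft_eq: "Ft t y = Ft t (x - d) + integral {x - d..y} (Fxt t)" if "y \<in> ball x d" for y
    by (rule partial_t_eq_integral_of_mixed_partial[OF open_ball _ box _ dx dt dxt cont_Fx cont_Fxt])
      (use d that in \<open>auto simp: dist_real_def\<close>)
  have cont: "continuous_on {x - d..x + d} (Fxt t)"
    by (rule continuous_on_compose2[OF cont_Fxt, of _ "\<lambda>y. (t, y)", simplified])
      (use box d in \<open>auto intro!: continuous_intros\<close>)
  have "((\<lambda>y. integral {x - d..y} (Fxt t)) has_real_derivative Fxt t x) (at x)"
    using integral_has_real_derivative[OF cont, of x] d
      at_within_interior[of x "{x - d..x + d}"] by simp
  then have "((\<lambda>y. Ft t (x - d) + integral {x - d..y} (Fxt t)) has_real_derivative Fxt t x) (at x)"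
    by (auto intro!: derivative_eq_intros)
  moreover have "((\<lambda>y. Ft t (x - d) + integral {x - d..y} (Fxt t)) has_real_derivative Ftx t x) (at x)"
    by (rule has_field_derivative_transform_within_open[OF dtx[OF U(2)] open_ball])
      (use d Ft_eq in auto)
  ultimately show ?thesis using DERIV_unique by blast
qed

lemma pdt_eqI: "((\<lambda>s. F s x) has_real_derivative D) (at t) \<Longrightarrow> pdt F t x = D"
  unfolding pdt_def by (rule DERIV_imp_deriv)

lemma pdx_eqI: "((\<lambda>y. F t y) has_real_derivative D) (at x) \<Longrightarrow> pdx F t x = D"
  unfolding pdx_def by (rule DERIV_imp_deriv)

lemma smooth2_open: "smooth2 U u \<Longrightarrow> open U"
  by (simp add: smooth2_def)

lemma smooth2_continuous_on: "smooth2 U u \<Longrightarrow> continuous_on U (\<lambda>z. pds ds u (fst z) (snd z))"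
  unfolding smooth2_def by (simp add: differentiable_imp_continuous_on)

lemma smooth2_has_pdt:
  assumes "smooth2 U u" "(t, x) \<in> U"
  shows "((\<lambda>s. pds ds u s x) has_real_derivative pds (True # ds) u t x) (at t)"
proof -
  have "(\<lambda>z. pds ds u (fst z) (snd z)) differentiable at (t, x)"
    using assms unfolding smooth2_def by (meson differentiable_on_eq_differentiable_at)
  then have "((\<lambda>z. pds ds u (fst z) (snd z)) \<circ> (\<lambda>s. (s, x))) differentiable at t"
    by (intro differentiable_chain_at derivative_intros) auto
  then show ?thesis by (simp add: o_def DERIV_deriv_iff_real_differentiable pdt_def)
qed

lemma smooth2_has_pdx:
  assumes "smooth2 U u" "(t, x) \<in> U"
  shows "((\<lambda>y. pds ds u t y) has_real_derivative pds (False # ds) u t x) (at x)"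
proof -
  have "(\<lambda>z. pds ds u (fst z) (snd z)) differentiable at (t, x)"
    using assms unfolding smooth2_def by (meson differentiable_on_eq_differentiable_at)
  then have "((\<lambda>z. pds ds u (fst z) (snd z)) \<circ> (\<lambda>y. (t, y))) differentiable at x"
    by (intro differentiable_chain_at derivative_intros) auto
  then show ?thesis by (simp add: o_def DERIV_deriv_iff_real_differentiable pdx_def)
qed

lemma smooth2_pdx_pdt_commute:
  assumes "smooth2 U u" "(t, x) \<in> U"
  shows "pds (False # True # ds) u t x = pds (True # False # ds) u t x"
  by (rule mixed_partials_eq[where F = "pds ds u" and U = U])
    (use assms smooth2_open smooth2_has_pdx smooth2_has_pdt smooth2_continuous_on in blast)+

lemma smooth2_pdxx_pdt_commute:
  assumes sm: "smooth2 U u" and tx: "(t, x) \<in> U"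
  shows "pdx (pdx (pdt u)) t x = pdt (pdx (pdx u)) t x"
proof -
  obtain S where S: "open S" "x \<in> S" "\<And>y. y \<in> S \<Longrightarrow> (t, y) \<in> U"
  proof
    show "open ((\<lambda>y. (t, y)) -` U)"
      by (rule continuous_open_vimage[OF smooth2_open[OF sm]]) (intro continuous_intros)
  qed (use tx in auto)
  have "((\<lambda>y. pdx (pdt u) t y) has_real_derivative pdx (pdx (pdt u)) t x) (at x)"
    using smooth2_has_pdx[OF sm tx, of "[False, True]"] by simp
  moreover have "((\<lambda>y. pdt (pdx u) t y) has_real_derivative pdx (pdt (pdx u)) t x) (at x)"
    using smooth2_has_pdx[OF sm tx, of "[True, False]"] by simp
  then have "((\<lambda>y. pdx (pdt u) t y) has_real_derivative pdx (pdt (pdx u)) t x) (at x)"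
    by (rule has_field_derivative_transform_within_open[OF _ S(1,2)])
      (use smooth2_pdx_pdt_commute[OF sm S(3), of _ "[]"] in simp)
  ultimately have "pdx (pdx (pdt u)) t x = pdx (pdt (pdx u)) t x"
    using DERIV_unique by blast
  also have "\<dots> = pdt (pdx (pdx u)) t x"
    using smooth2_pdx_pdt_commute[OF sm tx, of "[False]"] by simp
  finally show ?thesis .
qed

text \<open>The total derivatives \<open>D\<^sub>t T\<close> and \<open>D\<^sub>x \<Phi>\<close> in the jet variables
  \<open>q = u\<close>, \<open>qx = u\<^sub>x\<close>, \<open>qt = u\<^sub>t\<close>, \<open>qtx = u\<^sub>t\<^sub>x\<close>, ..., and \<open>g0, g1, g2\<close> for \<open>g, g', g''\<close> at \<open>u\<close>.\<close>
definition Tdens_dt_jet :: "real \<Rightarrow> real \<Rightarrow> real \<Rightarrow> real \<Rightarrow> real \<Rightarrow> real \<Rightarrow> real \<Rightarrow> real \<Rightarrow> real" where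
  "Tdens_dt_jet \<mu> \<nu> q qx qxx qt qtx qtxx =
     2 * qxx * qtxx + \<mu> * (2 * qx * qtx) + (\<mu> - 1) * (2 * q * qt) + 2 * \<nu> * qt"

definition Phi_dx_jet ::
  "real \<Rightarrow> real \<Rightarrow> real \<Rightarrow> real \<Rightarrow> real \<Rightarrow> real \<Rightarrow> real \<Rightarrow> real \<Rightarrow> real \<Rightarrow> real \<Rightarrow> real \<Rightarrow> real \<Rightarrow> real" where
  "Phi_dx_jet \<mu> \<nu> q qx qxx qxxx qt qtx qtxx g0 g1 g2 =
    (let m = q - qxx; mx = qx - qxxx in
       2 * (1 - \<mu>) * qx * qtx + 2 * ((1 - \<mu>) * q - \<nu>) * qtxx - 2 * qxx * qt - 2 * qx * qtx
     + (2 * (\<mu> - 2) * qx + mx) * m * g0 + (2 * ((\<mu> - 2) * q + \<nu>) + m) * (mx * g0 + m * g1 * qx)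
     + ((2 - \<mu>) * (2 * q * qx - 2 * qx * qxx) - \<nu> * qx) * g0
     + ((2 - \<mu>) * (q\<^sup>2 - qx\<^sup>2) - \<nu> * q) * g1 * qx
     + 1/2 * (\<mu> - 2) * qx * qx\<^sup>2 * g1 + 1/2 * ((\<mu> - 2) * q + \<nu>) * (2 * qx * qxx) * g1
     + 1/2 * ((\<mu> - 2) * q + \<nu>) * qx\<^sup>2 * g2 * qx
     + \<nu> * g0 * qx)"

lemma conservation_jet_identity:
  fixes q qx qxx qxxx qt qtx qtxx fv g0 g1 g2 \<mu> \<nu> :: real
  defines "m \<equiv> q - qxx" and "c \<equiv> (\<mu> - 2) * q + \<nu>"
  shows "Tdens_dt_jet \<mu> \<nu> q qx qxx qt qtx qtxx + Phi_dx_jet \<mu> \<nu> q qx qxx qxxx qt qtx qtxx g0 g1 g2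
    = 2 * (c + m) * (qt - qtxx + fv * m + g1 * qx * m + g0 * (qx - qxxx))
      - (c + m) * m * (2 * fv + qx * g1) + 1/2 * qx ^ 3 * (3 * (\<mu> - 2) * g1 + c * g2)"
  unfolding Tdens_dt_jet_def Phi_dx_jet_def Let_def m_def c_def
  by (simp add: field_simps power2_eq_square power3_eq_cube)

lemma has_pdt_Tdens:
  assumes sm: "smooth2 U u" and tx: "(t, x) \<in> U"
  shows "((\<lambda>s. Tdens \<mu> \<nu> u s x) has_real_derivative
     Tdens_dt_jet \<mu> \<nu> (u t x) (pdx u t x) (pdx (pdx u) t x) (pdt u t x) (pdx (pdt u) t x)
       (pdx (pdx (pdt u)) t x)) (at t)"
proof -
  have "((\<lambda>s. u s x) has_real_derivative pdt u t x) (at t)"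
    using smooth2_has_pdt[OF sm tx, of "[]"] by simp
  moreover have "((\<lambda>s. pdx u s x) has_real_derivative pdx (pdt u) t x) (at t)"
    using smooth2_has_pdt[OF sm tx, of "[False]"] smooth2_pdx_pdt_commute[OF sm tx, of "[]"] by simp
  moreover have "((\<lambda>s. pdx (pdx u) s x) has_real_derivative pdx (pdx (pdt u)) t x) (at t)"
    using smooth2_has_pdt[OF sm tx, of "[False, False]"] smooth2_pdxx_pdt_commute[OF sm tx] by simp
  ultimately show ?thesis unfolding Tdens_def
    by (auto intro!: derivative_eq_intros simp: Tdens_dt_jet_def)
qed

lemma has_pdx_Phi:
  assumes sm: "smooth2 U u" and tx: "(t, x) \<in> U"
    and g': "(g has_real_derivative deriv g (u t x)) (at (u t x))"
    and g'': "(deriv g has_real_derivative g2) (at (u t x))"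
    and G': "(G has_real_derivative g (u t x)) (at (u t x))"
  shows "((\<lambda>y. Phi \<mu> \<nu> g G u t y) has_real_derivative
     Phi_dx_jet \<mu> \<nu> (u t x) (pdx u t x) (pdx (pdx u) t x) (pdx (pdx (pdx u)) t x) (pdt u t x)
       (pdx (pdt u) t x) (pdx (pdx (pdt u)) t x) (g (u t x)) (deriv g (u t x)) g2) (at x)"
proof -
  have ux: "((\<lambda>y. u t y) has_real_derivative pdx u t x) (at x)"
    using smooth2_has_pdx[OF sm tx, of "[]"] by simp
  have uxx: "((\<lambda>y. pdx u t y) has_real_derivative pdx (pdx u) t x) (at x)"
    using smooth2_has_pdx[OF sm tx, of "[False]"] by simp
  have uxxx: "((\<lambda>y. pdx (pdx u) t y) has_real_derivative pdx (pdx (pdx u)) t x) (at x)"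
    using smooth2_has_pdx[OF sm tx, of "[False, False]"] by simp
  have utx: "((\<lambda>y. pdt u t y) has_real_derivative pdx (pdt u) t x) (at x)"
    using smooth2_has_pdx[OF sm tx, of "[True]"] by simp
  have utxx: "((\<lambda>y. pdx (pdt u) t y) has_real_derivative pdx (pdx (pdt u)) t x) (at x)"
    using smooth2_has_pdx[OF sm tx, of "[False, True]"] by simp
  show ?thesis unfolding Phi_def Let_def mfun_def
    apply (rule derivative_eq_intros ux uxx uxxx utx utxx refl
        DERIV_chain2[OF g' ux] DERIV_chain2[OF g'' ux] DERIV_chain2[OF G' ux])+
    by (simp add: Phi_dx_jet_def Let_def power2_eq_square field_simps)
qed

lemma solves_at_jet:
  assumes sm: "smooth2 U u" and tx: "(t, x) \<in> U"
    and g': "(g has_real_derivative deriv g (u t x)) (at (u t x))"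
    and sol: "solves_at f g u t x"
  shows "pdt u t x - pdx (pdx (pdt u)) t x + f (u t x) (pdx u t x) * (u t x - pdx (pdx u) t x)
     + deriv g (u t x) * pdx u t x * (u t x - pdx (pdx u) t x)
     + g (u t x) * (pdx u t x - pdx (pdx (pdx u)) t x) = 0"
proof -
  have ut: "((\<lambda>s. u s x) has_real_derivative pdt u t x) (at t)"
    using smooth2_has_pdt[OF sm tx, of "[]"] by simp
  have utxx: "((\<lambda>s. pdx (pdx u) s x) has_real_derivative pdx (pdx (pdt u)) t x) (at t)"
    using smooth2_has_pdt[OF sm tx, of "[False, False]"] smooth2_pdxx_pdt_commute[OF sm tx] by simp
  have ux: "((\<lambda>y. u t y) has_real_derivative pdx u t x) (at x)"
    using smooth2_has_pdx[OF sm tx, of "[]"] by simp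
  have uxxx: "((\<lambda>y. pdx (pdx u) t y) has_real_derivative pdx (pdx (pdx u)) t x) (at x)"
    using smooth2_has_pdx[OF sm tx, of "[False, False]"] by simp
  have "pdt (mfun u) t x = pdt u t x - pdx (pdx (pdt u)) t x"
    by (rule pdt_eqI) (use DERIV_diff[OF ut utxx] in \<open>simp add: mfun_def\<close>)
  moreover have "pdx (\<lambda>s y. g (u s y) * mfun u s y) t x =
      deriv g (u t x) * pdx u t x * (u t x - pdx (pdx u) t x)
      + g (u t x) * (pdx u t x - pdx (pdx (pdx u)) t x)"
    by (rule pdx_eqI)
      (use DERIV_mult[OF DERIV_chain2[OF g' ux] DERIV_diff[OF ux uxxx]] in \<open>simp add: mfun_def algebra_simps\<close>)
  ultimately show ?thesis
    using sol unfolding solves_at_def by (simp add: mfun_def add.assoc)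
qed

text \<open>The conditions under which the remainder in \<open>conservation_jet_identity\<close> vanishes
  at the value \<open>v\<close> of \<open>u\<close>; \<open>g2\<close> stands for \<open>g''(v)\<close>.\<close>
definition admissible_at ::
  "real \<Rightarrow> real \<Rightarrow> (real \<Rightarrow> real \<Rightarrow> real) \<Rightarrow> (real \<Rightarrow> real) \<Rightarrow> (real \<Rightarrow> real) \<Rightarrow> real \<Rightarrow> bool" where
  "admissible_at \<mu> \<nu> f g G v \<longleftrightarrow>
     (G has_real_derivative g v) (at v) \<and> (g has_real_derivative deriv g v) (at v)
     \<and> (\<exists>g2. (deriv g has_real_derivative g2) (at v)
             \<and> 3 * (\<mu> - 2) * deriv g v + ((\<mu> - 2) * v + \<nu>) * g2 = 0)
     \<and> (\<forall>w. 2 * f v w + w * deriv g v = 0)"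

lemma local_conservation_law:
  assumes sm: "smooth2 U u" and tx: "(t, x) \<in> U"
    and adm: "admissible_at \<mu> \<nu> f g G (u t x)" and sol: "solves_at f g u t x"
  shows "pdt (Tdens \<mu> \<nu> u) t x + pdx (Phi \<mu> \<nu> g G u) t x = 0"
proof -
  from adm obtain g2 where G': "(G has_real_derivative g (u t x)) (at (u t x))"
    and g': "(g has_real_derivative deriv g (u t x)) (at (u t x))"
    and g'': "(deriv g has_real_derivative g2) (at (u t x))"
    and g_ode: "3 * (\<mu> - 2) * deriv g (u t x) + ((\<mu> - 2) * u t x + \<nu>) * g2 = 0"
    and f_g: "2 * f (u t x) (pdx u t x) + pdx u t x * deriv g (u t x) = 0"
    unfolding admissible_at_def by blast
  have "pdt (Tdens \<mu> \<nu> u) t x = Tdens_dt_jet \<mu> \<nu> (u t x) (pdx u t x) (pdx (pdx u) t x)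
      (pdt u t x) (pdx (pdt u) t x) (pdx (pdx (pdt u)) t x)"
    by (rule pdt_eqI, rule has_pdt_Tdens[OF sm tx])
  moreover have "pdx (Phi \<mu> \<nu> g G u) t x = Phi_dx_jet \<mu> \<nu> (u t x) (pdx u t x) (pdx (pdx u) t x)
      (pdx (pdx (pdx u)) t x) (pdt u t x) (pdx (pdt u) t x) (pdx (pdx (pdt u)) t x)
      (g (u t x)) (deriv g (u t x)) g2"
    by (rule pdx_eqI, rule has_pdx_Phi[OF sm tx g' g'' G'])
  ultimately show ?thesis
    using conservation_jet_identity[where fv = "f (u t x) (pdx u t x)"]
      solves_at_jet[OF sm tx g' sol] f_g g_ode by (simp add: add.assoc)
qed

lemma admissible_at_family_a:
  assumes h: "smooth1 h" and G': "\<And>v. (G has_real_derivative h v) (at v)"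
  shows "admissible_at 2 0 (\<lambda>v vx. - (1/2) * vx * deriv h v) h G v"
proof -
  have "((deriv ^^ n) h) differentiable at v" for n
    using h unfolding smooth1_def by (simp add: differentiable_on_def)
  from this[of 0] this[of 1]
  have "(h has_real_derivative deriv h v) (at v)"
    and "(deriv h has_real_derivative deriv (deriv h) v) (at v)"
    by (simp_all add: DERIV_deriv_iff_real_differentiable)
  then show ?thesis using G' unfolding admissible_at_def by auto
qed

lemma admissible_at_family_b:
  assumes G': "\<And>v. (G has_real_derivative - 2 * \<alpha> * v + \<beta>) (at v)"
  shows "admissible_at 2 \<nu> (\<lambda>v vx. \<alpha> * vx) (\<lambda>v. - 2 * \<alpha> * v + \<beta>) G v"
proof -
  have g': "((\<lambda>v. - 2 * \<alpha> * v + \<beta>) has_real_derivative - 2 * \<alpha>) (at w)" for w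
    by (auto intro!: derivative_eq_intros)
  then have "deriv (\<lambda>v. - 2 * \<alpha> * v + \<beta>) = (\<lambda>w. - 2 * \<alpha>)"
    using DERIV_imp_deriv by blast
  then show ?thesis using G' g' unfolding admissible_at_def by (auto intro!: exI[of _ 0])
qed

lemma admissible_at_family_c:
  assumes v: "v + \<beta> \<noteq> 0" and G': "(G has_real_derivative \<alpha> / (v + \<beta>)\<^sup>2) (at v)"
  shows "admissible_at \<mu> ((\<mu> - 2) * \<beta>) (\<lambda>v vx. \<alpha> * vx / (v + \<beta>) ^ 3) (\<lambda>v. \<alpha> / (v + \<beta>)\<^sup>2) G v"
proof -
  have g': "((\<lambda>v. \<alpha> / (v + \<beta>)\<^sup>2) has_real_derivative - 2 * \<alpha> / (w + \<beta>) ^ 3) (at w)"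
    if "w + \<beta> \<noteq> 0" for w
    using that
    apply (auto intro!: derivative_eq_intros)
     apply (simp_all add: field_simps)
    by algebra
  have dg: "deriv (\<lambda>v. \<alpha> / (v + \<beta>)\<^sup>2) w = - 2 * \<alpha> / (w + \<beta>) ^ 3" if "w + \<beta> \<noteq> 0" for w
    using DERIV_imp_deriv[OF g'[OF that]] .
  have "((\<lambda>w. - 2 * \<alpha> / (w + \<beta>) ^ 3) has_real_derivative 6 * \<alpha> / (v + \<beta>) ^ 4) (at v)"
    using v by (auto intro!: derivative_eq_intros simp: field_simps)
  then have g'': "(deriv (\<lambda>v. \<alpha> / (v + \<beta>)\<^sup>2) has_real_derivative 6 * \<alpha> / (v + \<beta>) ^ 4) (at v)"
    by (rule has_field_derivative_transform_within_open[where S = "- {- \<beta>}"])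
      (use v dg in \<open>auto simp: add_eq_0_iff\<close>)
  have g_ode: "3 * (\<mu> - 2) * (- 2 * \<alpha> / (v + \<beta>) ^ 3)
      + ((\<mu> - 2) * v + (\<mu> - 2) * \<beta>) * (6 * \<alpha> / (v + \<beta>) ^ 4) = 0"
    using v by (simp add: field_simps) (simp add: eval_nat_numeral algebra_simps)
  show ?thesis unfolding admissible_at_def dg[OF v]
  proof (intro conjI exI allI)
    show "2 * (\<alpha> * w / (v + \<beta>) ^ 3) + w * (- 2 * \<alpha> / (v + \<beta>) ^ 3) = 0" for w
      by (simp add: field_simps)
  qed (use G' g'[OF v] g'' g_ode in auto)
qed

lemma continuous_on_Tdens:
  assumes "smooth2 U u"
  shows "continuous_on U (\<lambda>z. Tdens \<mu> \<nu> u (fst z) (snd z))"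
  using smooth2_continuous_on[OF assms, of "[]"] smooth2_continuous_on[OF assms, of "[False]"]
    smooth2_continuous_on[OF assms, of "[False, False]"]
  unfolding Tdens_def by (auto intro!: continuous_intros)

lemma continuous_on_pdt_Tdens:
  assumes sm: "smooth2 U u"
  shows "continuous_on U (\<lambda>z. pdt (Tdens \<mu> \<nu> u) (fst z) (snd z))"
proof -
  have "continuous_on U (\<lambda>z. pds ds u (fst z) (snd z))" for ds
    using smooth2_continuous_on[OF sm] .
  from this[of "[]"] this[of "[False]"] this[of "[False, False]"] this[of "[True]"]
    this[of "[False, True]"] this[of "[False, False, True]"]
  have "continuous_on U (\<lambda>z. Tdens_dt_jet \<mu> \<nu> (u (fst z) (snd z)) (pdx u (fst z) (snd z))
      (pdx (pdx u) (fst z) (snd z)) (pdt u (fst z) (snd z)) (pdx (pdt u) (fst z) (snd z))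
      (pdx (pdx (pdt u)) (fst z) (snd z)))"
    unfolding Tdens_dt_jet_def by (auto intro!: continuous_intros)
  moreover have "pdt (Tdens \<mu> \<nu> u) (fst z) (snd z) = Tdens_dt_jet \<mu> \<nu> (u (fst z) (snd z))
      (pdx u (fst z) (snd z)) (pdx (pdx u) (fst z) (snd z)) (pdt u (fst z) (snd z))
      (pdx (pdt u) (fst z) (snd z)) (pdx (pdx (pdt u)) (fst z) (snd z))" if "z \<in> U" for z
    by (rule pdt_eqI, rule has_pdt_Tdens[OF sm]) (use that in simp)
  ultimately show ?thesis using continuous_on_cong by fastforce
qed

lemma integral_has_derivative_zero_of_conservation_law:
  fixes T P :: "real \<Rightarrow> real \<Rightarrow> real"
  assumes I: "open I" "t \<in> I" "a \<le> b" "I \<times> {a..b} \<subseteq> U"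
    and T_diff: "\<And>s y. (s, y) \<in> U \<Longrightarrow> (\<lambda>s. T s y) differentiable (at s)"
    and P_diff: "\<And>s y. (s, y) \<in> U \<Longrightarrow> (\<lambda>y. P s y) differentiable (at y)"
    and cont_T: "continuous_on U (\<lambda>z. T (fst z) (snd z))"
    and cont_Tt: "continuous_on U (\<lambda>z. pdt T (fst z) (snd z))"
    and law: "\<And>s y. (s, y) \<in> U \<Longrightarrow> pdt T s y + pdx P s y = 0"
    and boundary: "P t a = 0" "P t b = 0"
  shows "((\<lambda>s. integral {a..b} (T s)) has_real_derivative 0) (at t)"
proof -
  have "((\<lambda>s. integral {a..b} (T s)) has_real_derivative integral {a..b} (pdt T t)) (at t)"
    by (rule has_real_derivative_integral_parameter[OF I(1,2,4) _ cont_T cont_Tt])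
      (use T_diff in \<open>simp add: pdt_def DERIV_deriv_iff_real_differentiable\<close>)
  moreover have "integral {a..b} (pdt T t) = - integral {a..b} (pdx P t)"
    using law I by (auto simp: eq_neg_iff_add_eq_0 simp flip: integral_neg intro!: integral_cong)
  moreover have "integral {a..b} (pdx P t) = P t b - P t a"
    by (rule integral_eq_diff_of_real_derivative[OF I(3)])
      (use I in \<open>auto simp: pdx_def DERIV_deriv_iff_real_differentiable intro!: P_diff\<close>)
  ultimately show ?thesis using boundary by simp
qed

theorem theorem3:
  fixes \<mu> \<nu> \<alpha> \<beta> :: real
    and h g G :: "real \<Rightarrow> real"
    and f :: "real \<Rightarrow> real \<Rightarrow> real"
    and u :: "real \<Rightarrow> real \<Rightarrow> real"
    and U :: "(real \<times> real) set"
  assumes fam: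
    "(\<nu> = 0 \<and> \<mu> = 2 \<and> smooth1 h
        \<and> f = (\<lambda>v vx. - (1/2) * vx * deriv h v) \<and> g = h
        \<and> (\<forall>v. (G has_real_derivative g v) (at v)))
   \<or> (\<nu> \<noteq> 0 \<and> \<mu> = 2
        \<and> f = (\<lambda>v vx. \<alpha> * vx) \<and> g = (\<lambda>v. - 2 * \<alpha> * v + \<beta>)
        \<and> (\<forall>v. (G has_real_derivative g v) (at v)))
   \<or> (\<mu> \<noteq> 2 \<and> \<nu> = (\<mu> - 2) * \<beta>
        \<and> f = (\<lambda>v vx. \<alpha> * vx / (v + \<beta>) ^ 3) \<and> g = (\<lambda>v. \<alpha> / (v + \<beta>)\<^sup>2)
        \<and> (\<forall>v. v + \<beta> \<noteq> 0 \<longrightarrow> (G has_real_derivative g v) (at v))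
        \<and> (\<forall>z\<in>U. u (fst z) (snd z) + \<beta> \<noteq> 0))"
    and smooth: "smooth2 U u"
    and sol: "\<forall>z\<in>U. solves_at f g u (fst z) (snd z)"
  shows "(\<forall>z\<in>U. pdt (Tdens \<mu> \<nu> u) (fst z) (snd z) + pdx (Phi \<mu> \<nu> g G u) (fst z) (snd z) = 0)
    \<and> (\<forall>a b I. a \<le> b \<longrightarrow> open I \<longrightarrow> I \<times> {a..b} \<subseteq> U
         \<longrightarrow> (\<forall>t\<in>I. Phi \<mu> \<nu> g G u t a = 0 \<and> Phi \<mu> \<nu> g G u t b = 0)
         \<longrightarrow> (\<forall>t\<in>I. ((\<lambda>s. integral {a..b} (\<lambda>x. Tdens \<mu> \<nu> u s x)) has_real_derivative 0) (at t)))"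
proof -
  have adm: "admissible_at \<mu> \<nu> f g G (u s y)" if "(s, y) \<in> U" for s y
    using fam that admissible_at_family_a[of h G] admissible_at_family_b[of G \<alpha> \<beta>]
      admissible_at_family_c[of "u s y" \<beta> G \<alpha> \<mu>]
    by (elim disjE conjE) force+
  have law: "pdt (Tdens \<mu> \<nu> u) s y + pdx (Phi \<mu> \<nu> g G u) s y = 0" if "(s, y) \<in> U" for s y
    using local_conservation_law[OF smooth that adm[OF that]] sol that by force
  have Phi_diff: "(\<lambda>y. Phi \<mu> \<nu> g G u s y) differentiable (at y)" if "(s, y) \<in> U" for s y
    using adm[OF that] has_pdx_Phi[OF smooth that] unfolding admissible_at_def real_differentiable_def
    by blast
  have Tdens_diff: "(\<lambda>s. Tdens \<mu> \<nu> u s y) differentiable (at s)" if "(s, y) \<in> U" for s y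
    using has_pdt_Tdens[OF smooth that] real_differentiable_def by blast
  show ?thesis
    using law Phi_diff Tdens_diff continuous_on_Tdens[OF smooth] continuous_on_pdt_Tdens[OF smooth]
    by (auto intro!: integral_has_derivative_zero_of_conservation_law[where U = U and P = "Phi \<mu> \<nu> g G u"])
qed

end
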